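(* For any category $\mathbf{E}$, the virtual double category $\mathbb{C}\mathrm{ospan}(\mathbf{E})$ has globular decompositions.
   Context: A virtual double category (VDC) has objects, tight arrows, loose arrows, and $n$-ary multicells from a composable path of $n$ loose arrows (an object when $n=0$) to a loose arrow with two tight sides, with identities and associative unital composition $\frac{\alpha_1\cdots\alpha_m}{\beta}$. A multicell is globular if its tight sides are identities. Globular decompositions: for $n\ge0$, $\mathbb{D}$ has $n$-ary globular decompositions if for every $n$-ary multicell $\alpha$ and every $m\ge1$ and $k_1+\cdots+k_m=n$ ($k_i\ge0$), $\alpha$ can be written as $\frac{\alpha_1\cdots\alpha_m}{\beta}$ with $\alpha_i$ $k_i$-ary and $\beta$ a globular $m$-ary multicell, and any two such decompositions are equivalent under the equivalence relation generated by $(\frac{\alpha_1}{\sigma_1},\dots,\frac{\alpha_m}{\sigma_m};\beta)\sim(\alpha_1,\dots,\alpha_m;\frac{\sigma_1\cdots\sigma_m}{\beta})$ for compatible rows $(\sigma_1,\dots,\sigma_m)$ of unary multicells whose outermost tight sides are identities. $\mathbb{D}$ has globular decompositions if it has $n$-ary globular decompositions for all $n\ge0$. $\mathbb{C}\mathrm{ospan}(\mathbf{E})$ has tight category $\mathbf{E}$, loose arrows the cospans $x\xrightarrow{a}z\xleftarrow{b}y$, and $n$-ary multicells from $x_{i-1}\xrightarrow{a_i}y_i\xleftarrow{b_i}x_i$ ($1\le i\le n$) to $z_0\xrightarrow{d_0}w\xleftarrow{d_1}z_1$ with tight sides $c_0,c_1$ given by morphisms $e_i:y_i\to w$ with $e_1a_1=d_0c_0$,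 $e_ib_i=e_{i+1}a_{i+1}$, $e_nb_n=d_1c_1$ (for $n=0$ the condition $d_0c_0=d_1c_1$); composition by pasting. *)

theory Defs
  imports Main
begin

record ('o,'m) category =
  cat_obj  :: "'o set"
  cat_arr  :: "'m set"
  cat_dom  :: "'m \<Rightarrow> 'o"
  cat_cod  :: "'m \<Rightarrow> 'o"
  cat_id   :: "'o \<Rightarrow> 'm"
  cat_comp :: "'m \<Rightarrow> 'm \<Rightarrow> 'm"   (* cat_comp g f = g \<circ> f *)

definition is_category :: "('o,'m) category \<Rightarrow> bool" where
  "is_category E \<longleftrightarrow>
     (\<forall>f\<in>cat_arr E. cat_dom E f \<in> cat_obj E \<and> cat_cod E f \<in> cat_obj E) \<and>
     (\<forall>x\<in>cat_obj E. cat_id E x \<in> cat_arr E \<and> cat_dom E (cat_id E x) = x \<and> cat_cod E (cat_id E x) = x) \<and>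
     (\<forall>f\<in>cat_arr E. \<forall>g\<in>cat_arr E. cat_cod E f = cat_dom E g \<longrightarrow>
        cat_comp E g f \<in> cat_arr E \<and> cat_dom E (cat_comp E g f) = cat_dom E f \<and>
        cat_cod E (cat_comp E g f) = cat_cod E g) \<and>
     (\<forall>f\<in>cat_arr E. cat_comp E (cat_id E (cat_cod E f)) f = f \<and> cat_comp E f (cat_id E (cat_dom E f)) = f) \<and>
     (\<forall>f\<in>cat_arr E. \<forall>g\<in>cat_arr E. \<forall>h\<in>cat_arr E.
        cat_cod E f = cat_dom E g \<and> cat_cod E g = cat_dom E h \<longrightarrow>
        cat_comp E h (cat_comp E g f) = cat_comp E (cat_comp E h g) f)"

text \<open>A multicell c has input path vcin c (a list of loose arrows; the empty list
  means the source is the object tdom (vcleft c) = tdom (vcright c)), output loose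
  arrow vcout c, and tight sides vcleft c, vcright c. The composite of a row
  alpha_1 ... alpha_m over beta is vccomp [alpha_1,...,alpha_m] beta.\<close>

record ('o,'t,'l,'c) vdc =
  vob     :: "'o set"
  vtight  :: "'t set"
  vloose  :: "'l set"
  vcell   :: "'c set"
  tdom    :: "'t \<Rightarrow> 'o"
  tcod    :: "'t \<Rightarrow> 'o"
  tid     :: "'o \<Rightarrow> 't"
  tcomp   :: "'t \<Rightarrow> 't \<Rightarrow> 't"
  lsrc    :: "'l \<Rightarrow> 'o"
  ltgt    :: "'l \<Rightarrow> 'o"
  vcin    :: "'c \<Rightarrow> 'l list"
  vcout   :: "'c \<Rightarrow> 'l"
  vcleft  :: "'c \<Rightarrow> 't"
  vcright :: "'c \<Rightarrow> 't"
  vccomp  :: "'c list \<Rightarrow> 'c \<Rightarrow> 'c"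
  vcid    :: "'l \<Rightarrow> 'c"

definition arity :: "('o,'t,'l,'c) vdc \<Rightarrow> 'c \<Rightarrow> nat" where
  "arity V c = length (vcin V c)"

definition composable :: "('o,'t,'l,'c) vdc \<Rightarrow> 'c list \<Rightarrow> 'c \<Rightarrow> bool" where
  "composable V as b \<longleftrightarrow>
     length as = length (vcin V b) \<and>
     (\<forall>i<length as. vcout V (as ! i) = vcin V b ! i) \<and>
     (\<forall>i. Suc i < length as \<longrightarrow> vcright V (as ! i) = vcleft V (as ! Suc i))"

definition globular :: "('o,'t,'l,'c) vdc \<Rightarrow> 'c \<Rightarrow> bool" where
  "globular V c \<longleftrightarrow>
     vcleft V c = tid V (tdom V (vcleft V c)) \<and> vcright V c = tid V (tdom V (vcright V c))"

definition is_gdecomp ::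
  "('o,'t,'l,'c) vdc \<Rightarrow> 'c \<Rightarrow> nat list \<Rightarrow> 'c list \<times> 'c \<Rightarrow> bool" where
  "is_gdecomp V \<alpha> ks d \<longleftrightarrow>
     (case d of (as, b) \<Rightarrow>
        b \<in> vcell V \<and> set as \<subseteq> vcell V \<and> composable V as b \<and>
        length as = length ks \<and> (\<forall>i<length ks. arity V (as ! i) = ks ! i) \<and>
        globular V b \<and> arity V b = length ks \<and> vccomp V as b = \<alpha>)"

text \<open>Generating step: (alpha_1/sigma_1, ..., alpha_m/sigma_m; beta) to
  (alpha_1, ..., alpha_m; sigma_1...sigma_m/beta), for a compatible row of unary
  multicells sigma whose outermost tight sides are identities.\<close>
definition gd_step :: "('o,'t,'l,'c) vdc \<Rightarrow> 'c list \<times> 'c \<Rightarrow> 'c list \<times> 'c \<Rightarrow> bool" where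
  "gd_step V d d' \<longleftrightarrow>
     (\<exists>as b ss.
        d = (map2 (\<lambda>a s. vccomp V [a] s) as ss, b) \<and> d' = (as, vccomp V ss b) \<and>
        ss \<noteq> [] \<and> length ss = length as \<and> set ss \<subseteq> vcell V \<and>
        (\<forall>i<length ss. arity V (ss ! i) = 1 \<and> composable V [as ! i] (ss ! i)) \<and>
        composable V ss b \<and>
        vcleft V (hd ss) = tid V (tdom V (vcleft V (hd ss))) \<and>
        vcright V (last ss) = tid V (tdom V (vcright V (last ss))))"

definition gd_equiv ::
  "('o,'t,'l,'c) vdc \<Rightarrow> 'c \<Rightarrow> nat list \<Rightarrow> 'c list \<times> 'c \<Rightarrow> 'c list \<times> 'c \<Rightarrow> bool" where
  "gd_equiv V \<alpha> ks =
     (\<lambda>d d'. is_gdecomp V \<alpha> ks d \<and> is_gdecomp V \<alpha> ks d' \<and>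
             (gd_step V d d' \<or> gd_step V d' d))\<^sup>*\<^sup>*"

definition has_nary_globular_decompositions :: "('o,'t,'l,'c) vdc \<Rightarrow> nat \<Rightarrow> bool" where
  "has_nary_globular_decompositions V n \<longleftrightarrow>
     (\<forall>\<alpha>\<in>vcell V. arity V \<alpha> = n \<longrightarrow>
        (\<forall>ks. ks \<noteq> [] \<and> sum_list ks = n \<longrightarrow>
           (\<exists>d. is_gdecomp V \<alpha> ks d) \<and>
           (\<forall>d d'. is_gdecomp V \<alpha> ks d \<and> is_gdecomp V \<alpha> ks d' \<longrightarrow> gd_equiv V \<alpha> ks d d')))"

definition has_globular_decompositions :: "('o,'t,'l,'c) vdc \<Rightarrow> bool" where
  "has_globular_decompositions V \<longleftrightarrow> (\<forall>n. has_nary_globular_decompositions V n)"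

text \<open>A loose arrow is a cospan (a, b): x --a--> z <--b-- y. A multicell records its
  input cospans, output cospan (d0, d1), tight sides c0, c1 and the legs e_i.\<close>

record 'm cospan_cell =
  cc_ins   :: "('m \<times> 'm) list"
  cc_out   :: "'m \<times> 'm"
  cc_left  :: "'m"
  cc_right :: "'m"
  cc_legs  :: "'m list"

definition cospans :: "('o,'m) category \<Rightarrow> ('m \<times> 'm) set" where
  "cospans E = {(a, b). a \<in> cat_arr E \<and> b \<in> cat_arr E \<and> cat_cod E a = cat_cod E b}"

definition cospan_cells :: "('o,'m) category \<Rightarrow> 'm cospan_cell set" where
  "cospan_cells E = {c.
     let ins = cc_ins c; n = length ins; (d0, d1) = cc_out c; c0 = cc_left c; c1 = cc_right c;
         es = cc_legs c; comp = cat_comp E; dom = cat_dom E; cod = cat_cod E in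
     set ins \<subseteq> cospans E \<and> (d0, d1) \<in> cospans E \<and> c0 \<in> cat_arr E \<and> c1 \<in> cat_arr E \<and>
     length es = n \<and> cod c0 = dom d0 \<and> cod c1 = dom d1 \<and>
     (if n = 0 then dom c0 = dom c1 \<and> comp d0 c0 = comp d1 c1
      else dom c0 = dom (fst (ins ! 0)) \<and> dom c1 = dom (snd (ins ! (n - 1))) \<and>
        (\<forall>i. Suc i < n \<longrightarrow> dom (snd (ins ! i)) = dom (fst (ins ! Suc i))) \<and>
        (\<forall>i<n. es ! i \<in> cat_arr E \<and> dom (es ! i) = cod (fst (ins ! i)) \<and> cod (es ! i) = cod d0) \<and>
        comp (es ! 0) (fst (ins ! 0)) = comp d0 c0 \<and>
        (\<forall>i. Suc i < n \<longrightarrow> comp (es ! i) (snd (ins ! i)) = comp (es ! Suc i) (fst (ins ! Suc i))) \<and>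
        comp (es ! (n - 1)) (snd (ins ! (n - 1))) = comp d1 c1)}"

definition cospan_ccomp ::
  "('o,'m) category \<Rightarrow> 'm cospan_cell list \<Rightarrow> 'm cospan_cell \<Rightarrow> 'm cospan_cell" where
  "cospan_ccomp E as b =
     \<lparr> cc_ins = concat (map cc_ins as),
       cc_out = cc_out b,
       cc_left = (if as = [] then cc_left b else cat_comp E (cc_left b) (cc_left (hd as))),
       cc_right = (if as = [] then cc_right b else cat_comp E (cc_right b) (cc_right (last as))),
       cc_legs = concat (map2 (\<lambda>a f. map (\<lambda>e. cat_comp E f e) (cc_legs a)) as (cc_legs b)) \<rparr>"

definition cospan_cid :: "('o,'m) category \<Rightarrow> 'm \<times> 'm \<Rightarrow> 'm cospan_cell" where
  "cospan_cid E l =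
     \<lparr> cc_ins = [l], cc_out = l,
       cc_left = cat_id E (cat_dom E (fst l)), cc_right = cat_id E (cat_dom E (snd l)),
       cc_legs = [cat_id E (cat_cod E (fst l))] \<rparr>"

definition Cospan :: "('o,'m) category \<Rightarrow> ('o, 'm, 'm \<times> 'm, 'm cospan_cell) vdc" where
  "Cospan E =
     \<lparr> vob = cat_obj E, vtight = cat_arr E, vloose = cospans E, vcell = cospan_cells E,
       tdom = cat_dom E, tcod = cat_cod E, tid = cat_id E, tcomp = cat_comp E,
       lsrc = (\<lambda>l. cat_dom E (fst l)), ltgt = (\<lambda>l. cat_dom E (snd l)),
       vcin = cc_ins, vcout = cc_out, vcleft = cc_left, vcright = cc_right,
       vccomp = cospan_ccomp E, vcid = cospan_cid E \<rparr>"

end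

theory Submission
  imports Defs
begin

text \<open>
  A multicell of \<open>Cospan(E)\<close> with legs \<open>e\<^sub>j\<close> into its apex \<open>w\<close> is a cocone: its boundary maps
  \<open>g\<^sub>0 = d\<^sub>0 c\<^sub>0\<close>, \<open>g\<^sub>j = e\<^sub>j b\<^sub>j = e\<^sub>j\<^sub>+\<^sub>1 a\<^sub>j\<^sub>+\<^sub>1\<close>, \<open>g\<^sub>n = d\<^sub>1 c\<^sub>1\<close> are the composites into \<open>w\<close> at the
  boundary objects. Cutting \<open>\<alpha>\<close> at the seams \<open>S\<^sub>i = k\<^sub>1 + \<dots> + k\<^sub>i\<close> of a shape gives a canonical
  decomposition: the \<open>i\<close>-th block has output cospan \<open>(g(S\<^sub>i), g(S\<^sub>i\<^sub>+\<^sub>1))\<close> with identity tight sides,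
  except that the outer seams keep \<open>d\<^sub>0, c\<^sub>0\<close> and \<open>d\<^sub>1, c\<^sub>1\<close>, and the globular cell has identity legs. Given any decomposition \<open>(\<alpha>\<^sub>1, \<dots>, \<alpha>\<^sub>m; \<beta>)\<close> where \<open>\<beta>\<close> has legs \<open>f\<^sub>i\<close>,
  postcomposing each \<open>\<alpha>\<^sub>i\<close> with \<open>f\<^sub>i\<close> gives a decomposition whose globular cell has identity
  legs. It is one generating step away from \<open>(\<alpha>\<^sub>1, \<dots>, \<alpha>\<^sub>m; \<beta>)\<close>, via the unary cells whiskering
  by the \<open>f\<^sub>i\<close>, and one step away from the canonical decomposition, via unary cells \<open>\<tau>\<^sub>i\<close> that
  carry the tight sides of the \<open>\<alpha>\<^sub>i\<close> at the interior seams. Hence all decompositions of a given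
  shape are equivalent to the canonical one.
\<close>

fun blocks :: "nat list \<Rightarrow> 'a list \<Rightarrow> 'a list list" where
  "blocks [] xs = []"
| "blocks (k # ks) xs = take k xs # blocks ks (drop k xs)"

lemma length_blocks [simp]: "length (blocks ks xs) = length ks"
  by (induction ks arbitrary: xs) auto

lemma in_set_blocks: "ys \<in> set (blocks ks xs) \<Longrightarrow> set ys \<subseteq> set xs"
  by (induction ks arbitrary: xs) (auto dest: in_set_takeD in_set_dropD)

lemma map_length_blocks: "sum_list ks = length xs \<Longrightarrow> map length (blocks ks xs) = ks"
  by (induction ks arbitrary: xs) auto

lemma concat_blocks: "sum_list ks = length xs \<Longrightarrow> concat (blocks ks xs) = xs"
  by (induction ks arbitrary: xs) auto

lemma blocks_concat: "blocks (map length xss) (concat xss) = xss"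
  by (induction xss) auto

lemma blocks_map: "blocks ks (map f xs) = map (map f) (blocks ks xs)"
  by (induction ks arbitrary: xs) (auto simp: take_map drop_map)

abbreviation offset :: "nat list \<Rightarrow> nat \<Rightarrow> nat" where
  "offset ks i \<equiv> sum_list (take i ks)"

lemma offset_Suc: "i < length ks \<Longrightarrow> offset ks (Suc i) = offset ks i + ks ! i"
  by (simp add: take_Suc_conv_app_nth)

lemma offset_le: "offset (ks :: nat list) i \<le> sum_list ks"
  by (metis append_take_drop_id le_add1 sum_list_append)

lemma nth_concat_block:
  "i < length xss \<Longrightarrow> j < length (xss ! i) \<Longrightarrow>
   concat xss ! (offset (map length xss) i + j) = xss ! i ! j"
proof (induction xss arbitrary: i)
  case (Cons xs xss)
  then show ?case by (cases i) (auto simp: nth_append add.assoc)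
qed simp

lemma length_nth_blocks: "sum_list ks = length xs \<Longrightarrow> i < length ks \<Longrightarrow> length (blocks ks xs ! i) = ks ! i"
  by (metis length_blocks map_length_blocks nth_map)

lemma nth_nth_blocks:
  assumes "sum_list ks = length xs" "i < length ks" "j < ks ! i"
  shows "blocks ks xs ! i ! j = xs ! (offset ks i + j)"
  using nth_concat_block[of i "blocks ks xs" j] assms
  by (simp add: concat_blocks map_length_blocks length_nth_blocks)

lemma map_nth_blocks [simp]: "map ((!) (blocks ks xs)) [0..<length ks] = blocks ks xs"
  by (metis length_blocks map_nth)

lemma gd_equiv_sym: "gd_equiv V \<alpha> ks d d' \<Longrightarrow> gd_equiv V \<alpha> ks d' d"
  unfolding gd_equiv_def by (rule sympD[OF symp_rtranclp, rotated]) (auto simp: symp_def)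

lemma gd_equiv_trans: "gd_equiv V \<alpha> ks d d' \<Longrightarrow> gd_equiv V \<alpha> ks d' d'' \<Longrightarrow> gd_equiv V \<alpha> ks d d''"
  unfolding gd_equiv_def by (rule rtranclp_trans)

lemma gd_equiv_of_steps_from:
  assumes "is_gdecomp V \<alpha> ks d" "is_gdecomp V \<alpha> ks d1" "is_gdecomp V \<alpha> ks d2"
    and "gd_step V d d1" "gd_step V d d2"
  shows "gd_equiv V \<alpha> ks d1 d2"
proof -
  let ?R = "\<lambda>d d'. is_gdecomp V \<alpha> ks d \<and> is_gdecomp V \<alpha> ks d' \<and> (gd_step V d d' \<or> gd_step V d' d)"
  have "?R d1 d" "?R d d2" using assms by simp_all
  then show ?thesis unfolding gd_equiv_def by (rule converse_rtranclp_into_rtranclp[OF _ r_into_rtranclp])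
qed

section \<open>Multicells of \<open>Cospan(E)\<close> as cocones\<close>

lemma Cospan_simps [simp]:
  "vcell (Cospan E) = cospan_cells E" "vcin (Cospan E) = cc_ins" "vcout (Cospan E) = cc_out"
  "vcleft (Cospan E) = cc_left" "vcright (Cospan E) = cc_right" "vccomp (Cospan E) = cospan_ccomp E"
  "tid (Cospan E) = cat_id E" "tdom (Cospan E) = cat_dom E"
  by (simp_all add: Cospan_def)

locale cospan_vdc =
  fixes E :: "('o, 'm) category"
  assumes category: "is_category E"
begin

abbreviation Arr where "Arr \<equiv> cat_arr E"
abbreviation Dom where "Dom \<equiv> cat_dom E"
abbreviation Cod where "Cod \<equiv> cat_cod E"
abbreviation Id where "Id \<equiv> cat_id E"
abbreviation cmp (infixr "\<cdot>" 55) where "g \<cdot> f \<equiv> cat_comp E g f"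

lemma obj_Dom: "f \<in> Arr \<Longrightarrow> Dom f \<in> cat_obj E"
  and obj_Cod: "f \<in> Arr \<Longrightarrow> Cod f \<in> cat_obj E"
  and arr_Id: "x \<in> cat_obj E \<Longrightarrow> Id x \<in> Arr"
  and Dom_Id [simp]: "x \<in> cat_obj E \<Longrightarrow> Dom (Id x) = x"
  and Cod_Id [simp]: "x \<in> cat_obj E \<Longrightarrow> Cod (Id x) = x"
  and arr_cmp: "f \<in> Arr \<Longrightarrow> g \<in> Arr \<Longrightarrow> Cod f = Dom g \<Longrightarrow> g \<cdot> f \<in> Arr"
  and Dom_cmp [simp]: "f \<in> Arr \<Longrightarrow> g \<in> Arr \<Longrightarrow> Cod f = Dom g \<Longrightarrow> Dom (g \<cdot> f) = Dom f"
  and Cod_cmp [simp]: "f \<in> Arr \<Longrightarrow> g \<in> Arr \<Longrightarrow> Cod f = Dom g \<Longrightarrow> Cod (g \<cdot> f) = Cod g"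
  and Id_cmp: "f \<in> Arr \<Longrightarrow> Cod f = x \<Longrightarrow> Id x \<cdot> f = f"
  and cmp_Id: "f \<in> Arr \<Longrightarrow> Dom f = x \<Longrightarrow> f \<cdot> Id x = f"
  and cmp_assoc: "f \<in> Arr \<Longrightarrow> g \<in> Arr \<Longrightarrow> h \<in> Arr \<Longrightarrow> Cod f = Dom g \<Longrightarrow> Cod g = Dom h \<Longrightarrow>
     (h \<cdot> g) \<cdot> f = h \<cdot> g \<cdot> f"
  using category unfolding is_category_def by auto

lemma cospansI: "a \<in> Arr \<Longrightarrow> b \<in> Arr \<Longrightarrow> Cod a = Cod b \<Longrightarrow> (a, b) \<in> cospans E"
  and cospansD: "l \<in> cospans E \<Longrightarrow> fst l \<in> Arr \<and> snd l \<in> Arr \<and> Cod (fst l) = Cod (snd l)"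
  unfolding cospans_def by auto

definition typed_cell :: "'m cospan_cell \<Rightarrow> bool" where
  "typed_cell c \<longleftrightarrow>
     set (cc_ins c) \<subseteq> cospans E \<and> cc_out c \<in> cospans E \<and> cc_left c \<in> Arr \<and> cc_right c \<in> Arr \<and>
     Cod (cc_left c) = Dom (fst (cc_out c)) \<and> Cod (cc_right c) = Dom (snd (cc_out c)) \<and>
     length (cc_legs c) = length (cc_ins c) \<and>
     (\<forall>j<length (cc_ins c). cc_legs c ! j \<in> Arr \<and> Dom (cc_legs c ! j) = Cod (fst (cc_ins c ! j)) \<and>
        Cod (cc_legs c ! j) = Cod (fst (cc_out c)))"

text \<open>
  \<open>G j\<close> is the common composite into the apex at the \<open>j\<close>-th boundary object; the pairwise
  equations in the definition of \<^const>\<open>cospan_cells\<close> say exactly that such a \<open>G\<close> exists.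
\<close>
definition commutes :: "'m cospan_cell \<Rightarrow> (nat \<Rightarrow> 'm) \<Rightarrow> bool" where
  "commutes c G \<longleftrightarrow>
     G 0 = fst (cc_out c) \<cdot> cc_left c \<and> G (length (cc_ins c)) = snd (cc_out c) \<cdot> cc_right c \<and>
     (\<forall>j<length (cc_ins c).
        cc_legs c ! j \<cdot> fst (cc_ins c ! j) = G j \<and> cc_legs c ! j \<cdot> snd (cc_ins c ! j) = G (Suc j))"

primrec boundary :: "'m cospan_cell \<Rightarrow> nat \<Rightarrow> 'm" where
  "boundary c 0 = fst (cc_out c) \<cdot> cc_left c"
| "boundary c (Suc j) = cc_legs c ! j \<cdot> snd (cc_ins c ! j)"

lemma cospan_cellsD:
  assumes "c \<in> cospan_cells E"
  shows "typed_cell c \<and> commutes c (boundary c)"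
proof (cases c)
  case (fields ins out c0 c1 es)
  obtain d0 d1 where out: "out = (d0, d1)" by fastforce
  show ?thesis
  proof (cases "length ins")
    case 0
    with assms show ?thesis
      unfolding fields out cospan_cells_def typed_cell_def commutes_def by (auto simp: Let_def)
  next
    case (Suc n)
    then have "ins \<noteq> []" by auto
    with Suc assms show ?thesis
      unfolding fields out cospan_cells_def typed_cell_def commutes_def
      by (auto simp: Let_def All_less_Suc2)
  qed
qed

lemma cospan_cellsI:
  assumes typed: "typed_cell c" and G: "commutes c G"
  shows "c \<in> cospan_cells E"
proof (cases c)
  case (fields ins out c0 c1 es)
  obtain d0 d1 where out: "out = (d0, d1)" by fastforce
  let ?n = "length ins"
  have ins: "fst (ins ! j) \<in> Arr" "snd (ins ! j) \<in> Arr" "Cod (fst (ins ! j)) = Cod (snd (ins ! j))"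
    if "j < ?n" for j
  proof -
    have "ins ! j \<in> cospans E"
      using typed nth_mem[OF that] unfolding typed_cell_def fields by auto
    then show "fst (ins ! j) \<in> Arr" "snd (ins ! j) \<in> Arr" "Cod (fst (ins ! j)) = Cod (snd (ins ! j))"
      by (simp_all add: cospansD)
  qed
  have sides: "d0 \<in> Arr" "d1 \<in> Arr" "c0 \<in> Arr" "c1 \<in> Arr" "Cod c0 = Dom d0" "Cod c1 = Dom d1"
    using typed unfolding typed_cell_def fields out by (auto dest: cospansD)
  have legs: "es ! j \<in> Arr" "Dom (es ! j) = Cod (fst (ins ! j))" if "j < ?n" for j
    using typed that unfolding typed_cell_def fields by auto
  have G_eqs: "G 0 = d0 \<cdot> c0" "G ?n = d1 \<cdot> c1"
    "\<And>j. j < ?n \<Longrightarrow> G j = es ! j \<cdot> fst (ins ! j) \<and> G (Suc j) = es ! j \<cdot> snd (ins ! j)"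
    using G unfolding commutes_def fields out by auto
  have Dom_G: "Dom (G 0) = Dom c0" "Dom (G ?n) = Dom c1"
    "\<And>j. j < ?n \<Longrightarrow> Dom (G j) = Dom (fst (ins ! j)) \<and> Dom (G (Suc j)) = Dom (snd (ins ! j))"
    using G_eqs sides ins legs by simp_all
  show ?thesis
  proof (cases ?n)
    case 0
    then show ?thesis
      using typed G_eqs(1,2) Dom_G(1,2) unfolding cospan_cells_def typed_cell_def fields out
      by (auto simp: Let_def)
  next
    case (Suc n)
    have "Dom c0 = Dom (fst (ins ! 0))" "Dom c1 = Dom (snd (ins ! n))"
      using Dom_G Suc by (metis lessI zero_less_Suc)+
    moreover have "\<forall>i. Suc i < ?n \<longrightarrow> Dom (snd (ins ! i)) = Dom (fst (ins ! Suc i))"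
      using Dom_G(3) by (metis Suc_lessD)
    moreover have "es ! 0 \<cdot> fst (ins ! 0) = d0 \<cdot> c0" "es ! n \<cdot> snd (ins ! n) = d1 \<cdot> c1"
      using G_eqs Suc by (metis lessI zero_less_Suc)+
    moreover have "\<forall>i. Suc i < ?n \<longrightarrow> es ! i \<cdot> snd (ins ! i) = es ! Suc i \<cdot> fst (ins ! Suc i)"
      using G_eqs(3) by (metis Suc_lessD)
    ultimately show ?thesis
      using typed Suc unfolding cospan_cells_def typed_cell_def fields out by (auto simp: Let_def)
  qed
qed

lemma
  assumes "c \<in> cospan_cells E"
  shows cell_out: "cc_out c \<in> cospans E" "fst (cc_out c) \<in> Arr" "snd (cc_out c) \<in> Arr"
      "Cod (snd (cc_out c)) = Cod (fst (cc_out c))"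
    and cell_sides: "cc_left c \<in> Arr" "cc_right c \<in> Arr"
      "Cod (cc_left c) = Dom (fst (cc_out c))" "Cod (cc_right c) = Dom (snd (cc_out c))"
    and length_cell_legs: "length (cc_legs c) = length (cc_ins c)"
  using cospan_cellsD[OF assms] unfolding typed_cell_def by (auto dest: cospansD)

lemma
  assumes "c \<in> cospan_cells E" and "j < length (cc_ins c)"
  shows cell_in: "fst (cc_ins c ! j) \<in> Arr" "snd (cc_ins c ! j) \<in> Arr"
      "Cod (snd (cc_ins c ! j)) = Cod (fst (cc_ins c ! j))"
    and cell_leg: "cc_legs c ! j \<in> Arr" "Dom (cc_legs c ! j) = Cod (fst (cc_ins c ! j))"
      "Cod (cc_legs c ! j) = Cod (fst (cc_out c))"
proof -
  have "cc_ins c ! j \<in> cospans E"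
    using cospan_cellsD[OF assms(1)] nth_mem[OF assms(2)] unfolding typed_cell_def by auto
  then show "fst (cc_ins c ! j) \<in> Arr" "snd (cc_ins c ! j) \<in> Arr"
      "Cod (snd (cc_ins c ! j)) = Cod (fst (cc_ins c ! j))"
    by (simp_all add: cospansD)
  show "cc_legs c ! j \<in> Arr" "Dom (cc_legs c ! j) = Cod (fst (cc_ins c ! j))"
      "Cod (cc_legs c ! j) = Cod (fst (cc_out c))"
    using cospan_cellsD[OF assms(1)] assms(2) unfolding typed_cell_def by auto
qed

lemma commutes_boundary: "c \<in> cospan_cells E \<Longrightarrow> commutes c (boundary c)"
  using cospan_cellsD by blast

lemma boundary_arr:
  assumes "c \<in> cospan_cells E" and "j \<le> length (cc_ins c)"
  shows "boundary c j \<in> Arr" "Cod (boundary c j) = Cod (fst (cc_out c))"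
proof -
  have "boundary c j \<in> Arr \<and> Cod (boundary c j) = Cod (fst (cc_out c))"
  proof (cases "j < length (cc_ins c)")
    case True
    then have "boundary c j = cc_legs c ! j \<cdot> fst (cc_ins c ! j)"
      using commutes_boundary[OF assms(1)] unfolding commutes_def by simp
    then show ?thesis using cell_in[OF assms(1) True] cell_leg[OF assms(1) True] by (simp add: arr_cmp)
  next
    case False
    then have "boundary c j = snd (cc_out c) \<cdot> cc_right c"
      using assms(2) commutes_boundary[OF assms(1)] unfolding commutes_def by simp
    then show ?thesis using cell_out[OF assms(1)] cell_sides[OF assms(1)] by (simp add: arr_cmp)
  qed
  then show "boundary c j \<in> Arr" "Cod (boundary c j) = Cod (fst (cc_out c))" by simp_all
qed

definition postcompose :: "'m \<Rightarrow> 'm cospan_cell \<Rightarrow> 'm cospan_cell" where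
  "postcompose f x = x\<lparr>cc_out := (f \<cdot> fst (cc_out x), f \<cdot> snd (cc_out x)), cc_legs := map ((\<cdot>) f) (cc_legs x)\<rparr>"

definition postcompose_cell :: "'m \<times> 'm \<Rightarrow> 'm \<Rightarrow> 'm cospan_cell" where
  "postcompose_cell l f =
     \<lparr>cc_ins = [l], cc_out = (f \<cdot> fst l, f \<cdot> snd l), cc_left = Id (Dom (fst l)), cc_right = Id (Dom (snd l)),
      cc_legs = [f]\<rparr>"

lemma postcompose_cell_in_cells:
  assumes l: "l \<in> cospans E" and f: "f \<in> Arr" "Dom f = Cod (fst l)"
  shows "postcompose_cell l f \<in> cospan_cells E"
proof (rule cospan_cellsI)
  show "typed_cell (postcompose_cell l f)"
    using l cospansD[OF l] f obj_Dom[of "fst l"] obj_Dom[of "snd l"]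
    unfolding typed_cell_def postcompose_cell_def by (auto intro!: cospansI arr_cmp arr_Id)
  show "commutes (postcompose_cell l f) (\<lambda>j. if j = 0 then f \<cdot> fst l else f \<cdot> snd l)"
    using cospansD[OF l] f unfolding commutes_def postcompose_cell_def
    by (auto simp: cmp_Id arr_cmp obj_Dom)
qed

lemma postcompose_in_cells:
  assumes x: "x \<in> cospan_cells E" and f: "f \<in> Arr" "Dom f = Cod (fst (cc_out x))"
  shows "postcompose f x \<in> cospan_cells E"
proof (rule cospan_cellsI)
  show "typed_cell (postcompose f x)"
    using cospan_cellsD[OF x] cell_out[OF x] f unfolding typed_cell_def postcompose_def
    by (auto intro!: cospansI arr_cmp)
  show "commutes (postcompose f x) (\<lambda>j. f \<cdot> boundary x j)"
    using commutes_boundary[OF x] cell_out[OF x] cell_sides[OF x] cell_in[OF x] cell_leg[OF x] f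
      length_cell_legs[OF x]
    unfolding commutes_def postcompose_def by (auto simp: cmp_assoc)
qed

lemma comp_postcompose_cell:
  assumes x: "x \<in> cospan_cells E" and f: "f \<in> Arr" "Dom f = Cod (fst (cc_out x))"
  shows "cospan_ccomp E [x] (postcompose_cell (cc_out x) f) = postcompose f x"
  using cell_sides[OF x] unfolding cospan_ccomp_def postcompose_cell_def postcompose_def
  by (simp add: Id_cmp)

lemma map_Id_cmp_legs:
  assumes "c \<in> cospan_cells E"
  shows "map ((\<cdot>) (Id (Cod (fst (cc_out c))))) (cc_legs c) = cc_legs c"
proof (rule map_idI)
  fix e assume "e \<in> set (cc_legs c)"
  then obtain j where "j < length (cc_ins c)" "e = cc_legs c ! j"
    by (metis in_set_conv_nth length_cell_legs[OF assms])
  then show "Id (Cod (fst (cc_out c))) \<cdot> e = e" using cell_leg[OF assms] by (simp add: Id_cmp)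
qed

section \<open>The canonical decomposition\<close>

definition seam_map :: "'m cospan_cell \<Rightarrow> nat list \<Rightarrow> nat \<Rightarrow> 'm" where
  "seam_map a ks i =
     (if i = 0 then fst (cc_out a) else if i = length ks then snd (cc_out a) else boundary a (offset ks i))"

definition seam_side :: "'m cospan_cell \<Rightarrow> nat list \<Rightarrow> nat \<Rightarrow> 'm" where
  "seam_side a ks i =
     (if i = 0 then cc_left a else if i = length ks then cc_right a else Id (Dom (boundary a (offset ks i))))"

definition canonical_block :: "'m cospan_cell \<Rightarrow> nat list \<Rightarrow> nat \<Rightarrow> 'm cospan_cell" where
  "canonical_block a ks i =
     \<lparr>cc_ins = blocks ks (cc_ins a) ! i, cc_out = (seam_map a ks i, seam_map a ks (Suc i)),
      cc_left = seam_side a ks i, cc_right = seam_side a ks (Suc i), cc_legs = blocks ks (cc_legs a) ! i\<rparr>"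

definition canonical_glue :: "'m cospan_cell \<Rightarrow> nat list \<Rightarrow> 'm cospan_cell" where
  "canonical_glue a ks =
     \<lparr>cc_ins = map (\<lambda>i. (seam_map a ks i, seam_map a ks (Suc i))) [0..<length ks], cc_out = cc_out a,
      cc_left = Id (Cod (cc_left a)), cc_right = Id (Cod (cc_right a)),
      cc_legs = replicate (length ks) (Id (Cod (fst (cc_out a))))\<rparr>"

definition canonical_decomp :: "'m cospan_cell \<Rightarrow> nat list \<Rightarrow> 'm cospan_cell list \<times> 'm cospan_cell" where
  "canonical_decomp a ks = (map (canonical_block a ks) [0..<length ks], canonical_glue a ks)"

lemma seam_map_0 [simp]: "seam_map a ks 0 = fst (cc_out a)"
  and seam_map_length [simp]: "ks \<noteq> [] \<Longrightarrow> seam_map a ks (length ks) = snd (cc_out a)"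
  by (simp_all add: seam_map_def)

context
  fixes a :: "'m cospan_cell" and ks :: "nat list"
  assumes a: "a \<in> cospan_cells E" and ks: "sum_list ks = length (cc_ins a)" "ks \<noteq> []"
begin

lemma sum_ks_legs: "sum_list ks = length (cc_legs a)"
  using ks(1) length_cell_legs[OF a] by simp

lemma
  assumes "i \<le> length ks"
  shows seam_map_arr: "seam_map a ks i \<in> Arr" "Cod (seam_map a ks i) = Cod (fst (cc_out a))"
    and seam_side_arr: "seam_side a ks i \<in> Arr" "Cod (seam_side a ks i) = Dom (seam_map a ks i)"
    and seam_map_side: "seam_map a ks i \<cdot> seam_side a ks i = boundary a (offset ks i)"
proof -
  consider "i = 0" | "i = length ks" "i \<noteq> 0" | "0 < i" "i < length ks"
    using assms by linarith
  then have "seam_map a ks i \<in> Arr \<and> Cod (seam_map a ks i) = Cod (fst (cc_out a)) \<and>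
    seam_side a ks i \<in> Arr \<and> Cod (seam_side a ks i) = Dom (seam_map a ks i) \<and>
    seam_map a ks i \<cdot> seam_side a ks i = boundary a (offset ks i)"
  proof cases
    case 1
    then show ?thesis using cell_out[OF a] cell_sides[OF a] by (simp add: seam_map_def seam_side_def)
  next
    case 2
    then have "boundary a (offset ks i) = snd (cc_out a) \<cdot> cc_right a"
      using commutes_boundary[OF a] ks(1) unfolding commutes_def by simp
    then show ?thesis using 2 cell_out[OF a] cell_sides[OF a] by (simp add: seam_map_def seam_side_def)
  next
    case 3
    have "offset ks i \<le> length (cc_ins a)" using offset_le ks(1) by metis
    then show ?thesis
      using 3 boundary_arr[OF a] by (simp add: seam_map_def seam_side_def arr_Id obj_Dom cmp_Id)
  qed
  then show "seam_map a ks i \<in> Arr" "Cod (seam_map a ks i) = Cod (fst (cc_out a))"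
    "seam_side a ks i \<in> Arr" "Cod (seam_side a ks i) = Dom (seam_map a ks i)"
    "seam_map a ks i \<cdot> seam_side a ks i = boundary a (offset ks i)"
    by simp_all
qed

lemma canonical_block_in_cells:
  assumes i: "i < length ks"
  shows "canonical_block a ks i \<in> cospan_cells E"
proof (rule cospan_cellsI)
  define S where "S = offset ks i"
  have S: "S + ks ! i \<le> length (cc_ins a)" "offset ks (Suc i) = S + ks ! i"
    using offset_le[of "Suc i" ks] offset_Suc[OF i] ks(1) unfolding S_def by auto
  have ins: "length (blocks ks (cc_ins a) ! i) = ks ! i"
    "\<And>j. j < ks ! i \<Longrightarrow> blocks ks (cc_ins a) ! i ! j = cc_ins a ! (S + j)"
    using length_nth_blocks nth_nth_blocks ks(1) i unfolding S_def by auto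
  have legs: "length (blocks ks (cc_legs a) ! i) = ks ! i"
    "\<And>j. j < ks ! i \<Longrightarrow> blocks ks (cc_legs a) ! i ! j = cc_legs a ! (S + j)"
    using length_nth_blocks nth_nth_blocks sum_ks_legs i unfolding S_def by auto
  have ins_cospans: "set (blocks ks (cc_ins a) ! i) \<subseteq> cospans E"
    using in_set_blocks[OF nth_mem] i cospan_cellsD[OF a] unfolding typed_cell_def by fastforce
  show "typed_cell (canonical_block a ks i)"
    unfolding typed_cell_def canonical_block_def
    using ins ins_cospans legs S seam_map_arr[of i] seam_map_arr[of "Suc i"] seam_side_arr[of i]
      seam_side_arr[of "Suc i"] i cell_leg[OF a]
    by (auto intro!: cospansI)
  show "commutes (canonical_block a ks i) (\<lambda>j. boundary a (S + j))"
    unfolding commutes_def canonical_block_def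
    using ins legs S seam_map_side[of i] seam_map_side[of "Suc i"] i commutes_boundary[OF a]
    unfolding S_def commutes_def by auto
qed

lemma canonical_glue_in_cells: "canonical_glue a ks \<in> cospan_cells E"
proof (rule cospan_cellsI)
  show "typed_cell (canonical_glue a ks)"
    unfolding typed_cell_def canonical_glue_def
    using seam_map_arr cell_out[OF a] cell_sides[OF a] obj_Cod[of "cc_left a"] obj_Cod[of "cc_right a"]
      obj_Cod[of "fst (cc_out a)"]
    by (auto intro!: cospansI arr_Id)
  show "commutes (canonical_glue a ks) (seam_map a ks)"
    unfolding commutes_def canonical_glue_def
    using seam_map_arr cell_out[OF a] cell_sides[OF a] ks(2) by (auto simp: cmp_Id Id_cmp)
qed

lemma canonical_decomp_composite:
  "cospan_ccomp E (map (canonical_block a ks) [0..<length ks]) (canonical_glue a ks) = a"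
proof -
  let ?bs = "map (canonical_block a ks) [0..<length ks]"
  have "hd ?bs = canonical_block a ks 0" "last ?bs = canonical_block a ks (length ks - 1)"
    using ks(2) by (simp_all add: hd_map last_map)
  moreover have "concat (map cc_ins ?bs) = cc_ins a"
    using concat_blocks[OF ks(1)] by (simp add: canonical_block_def comp_def map_nth)
  moreover have "concat (map2 (\<lambda>x f. map ((\<cdot>) f) (cc_legs x)) ?bs (cc_legs (canonical_glue a ks))) = cc_legs a"
  proof -
    have "map2 (\<lambda>x f. map ((\<cdot>) f) (cc_legs x)) ?bs (cc_legs (canonical_glue a ks))
        = blocks ks (map ((\<cdot>) (Id (Cod (fst (cc_out a))))) (cc_legs a))"
      by (rule nth_equalityI) (simp_all add: canonical_glue_def canonical_block_def blocks_map)
    then show ?thesis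
      using concat_blocks[OF sum_ks_legs] map_Id_cmp_legs[OF a] by simp
  qed
  ultimately show ?thesis
    using ks(2) cell_sides[OF a] cell_out[OF a]
    by (simp add: cospan_ccomp_def canonical_glue_def canonical_block_def seam_side_def Id_cmp)
qed

lemma canonical_decomp_is_gdecomp: "is_gdecomp (Cospan E) a ks (canonical_decomp a ks)"
  unfolding is_gdecomp_def canonical_decomp_def composable_def globular_def arity_def
  using canonical_glue_in_cells canonical_block_in_cells canonical_decomp_composite
    length_nth_blocks[OF ks(1)] cell_sides[OF a] obj_Cod[of "cc_left a"] obj_Cod[of "cc_right a"]
  by (auto simp: canonical_block_def canonical_glue_def)

end

end

section \<open>Every decomposition is equivalent to the canonical one\<close>

locale gdecomposition = cospan_vdc E for E :: "('o, 'm) category" +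
  fixes a :: "'m cospan_cell" and ks :: "nat list" and as :: "'m cospan_cell list" and b :: "'m cospan_cell"
  assumes gdecomp: "is_gdecomp (Cospan E) a ks (as, b)"
    and a_cell: "a \<in> cospan_cells E" and ks_ne: "ks \<noteq> []"
begin

abbreviation m where "m \<equiv> length ks"
abbreviation leg where "leg i \<equiv> cc_legs b ! i"
abbreviation apex where "apex \<equiv> Cod (fst (cc_out b))"

lemma
  shows b_cell: "b \<in> cospan_cells E"
    and as_cell: "\<And>i. i < m \<Longrightarrow> as ! i \<in> cospan_cells E"
    and length_as: "length as = m"
    and ins_b: "cc_ins b = map cc_out as"
    and right_left: "\<And>i. Suc i < m \<Longrightarrow> cc_right (as ! i) = cc_left (as ! Suc i)"
    and ks_eq: "map (length \<circ> cc_ins) as = ks"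
    and left_b: "cc_left b = Id (Dom (cc_left b))"
    and right_b: "cc_right b = Id (Dom (cc_right b))"
    and composite: "cospan_ccomp E as b = a"
  using gdecomp unfolding is_gdecomp_def composable_def globular_def arity_def
  by (auto intro: nth_equalityI)

lemma m_pos: "0 < m"
  using ks_ne by simp

lemma map_nth_as: "map (\<lambda>i. f (as ! i)) [0..<m] = map f as"
  using length_as by (intro nth_equalityI) simp_all

lemma length_ins_as: "i < m \<Longrightarrow> length (cc_ins (as ! i)) = ks ! i"
  by (metis ks_eq length_as nth_map comp_apply)

lemma
  assumes "i < m"
  shows leg_arr: "leg i \<in> Arr" "Dom (leg i) = Cod (fst (cc_out (as ! i)))" "Cod (leg i) = apex"
    and boundary_b: "boundary b i = leg i \<cdot> fst (cc_out (as ! i))"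
      "boundary b (Suc i) = leg i \<cdot> snd (cc_out (as ! i))"
  using cell_leg[OF b_cell] commutes_boundary[OF b_cell] assms ins_b length_as
  unfolding commutes_def by auto

lemma globular_b: "cc_left b = Id (Dom (fst (cc_out b)))" "cc_right b = Id (Dom (snd (cc_out b)))"
proof -
  have "Cod (cc_left b) = Dom (cc_left b)" "Cod (cc_right b) = Dom (cc_right b)"
    using arg_cong[of _ _ Cod, OF left_b] arg_cong[of _ _ Cod, OF right_b] cell_sides[OF b_cell]
    by (simp_all add: obj_Dom)
  then have "Id (Dom (cc_left b)) = Id (Dom (fst (cc_out b)))"
    "Id (Dom (cc_right b)) = Id (Dom (snd (cc_out b)))"
    using cell_sides[OF b_cell] by simp_all
  with left_b right_b show "cc_left b = Id (Dom (fst (cc_out b)))" "cc_right b = Id (Dom (snd (cc_out b)))"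
    by simp_all
qed

lemma boundary_b_0: "boundary b 0 = fst (cc_out b)"
  and boundary_b_m: "boundary b m = snd (cc_out b)"
  using commutes_boundary[OF b_cell] cell_out[OF b_cell] ins_b length_as
  unfolding commutes_def by (simp_all add: globular_b cmp_Id)

lemma Dom_out_b_fst: "Dom (fst (cc_out b)) = Dom (fst (cc_out (as ! 0)))"
  and Dom_out_b_snd: "Dom (snd (cc_out b)) = Dom (snd (cc_out (as ! (m - 1))))"
proof -
  have m: "m - 1 < m" "Suc (m - 1) = m" using m_pos by simp_all
  have "fst (cc_out b) = leg 0 \<cdot> fst (cc_out (as ! 0))"
    using boundary_b(1)[OF m_pos] boundary_b_0 by simp
  then show "Dom (fst (cc_out b)) = Dom (fst (cc_out (as ! 0)))"
    using leg_arr[OF m_pos] cell_out[OF as_cell[OF m_pos]] by simp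
  have "snd (cc_out b) = leg (m - 1) \<cdot> snd (cc_out (as ! (m - 1)))"
    using boundary_b(2)[OF m(1)] boundary_b_m m(2) by metis
  then show "Dom (snd (cc_out b)) = Dom (snd (cc_out (as ! (m - 1))))"
    using leg_arr[OF m(1)] cell_out[OF as_cell[OF m(1)]] by simp
qed

lemma
  shows out_a: "cc_out a = cc_out b"
    and left_a: "cc_left a = cc_left (as ! 0)"
    and right_a: "cc_right a = cc_right (as ! (m - 1))"
    and ins_a: "cc_ins a = concat (map cc_ins as)"
    and legs_a: "cc_legs a = concat (map (\<lambda>i. map ((\<cdot>) (leg i)) (cc_legs (as ! i))) [0..<m])"
proof -
  have "as \<noteq> []" using length_as m_pos by auto
  then have "cc_left a = cc_left b \<cdot> cc_left (as ! 0)" "cc_right a = cc_right b \<cdot> cc_right (as ! (m - 1))"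
    using composite[symmetric] length_as by (simp_all add: cospan_ccomp_def hd_conv_nth last_conv_nth)
  then show "cc_left a = cc_left (as ! 0)" "cc_right a = cc_right (as ! (m - 1))"
    using cell_sides[OF as_cell] m_pos by (simp_all add: globular_b Dom_out_b_fst Dom_out_b_snd Id_cmp)
  have "map2 (\<lambda>x f. map ((\<cdot>) f) (cc_legs x)) as (cc_legs b)
      = map (\<lambda>i. map ((\<cdot>) (leg i)) (cc_legs (as ! i))) [0..<m]"
    using length_as length_cell_legs[OF b_cell] ins_b by (intro nth_equalityI) simp_all
  then show "cc_out a = cc_out b" "cc_ins a = concat (map cc_ins as)"
    "cc_legs a = concat (map (\<lambda>i. map ((\<cdot>) (leg i)) (cc_legs (as ! i))) [0..<m])"
    using composite[symmetric] by (simp_all add: cospan_ccomp_def)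
qed

lemma sum_ks: "sum_list ks = length (cc_ins a)"
  using ks_eq by (simp add: ins_a length_concat)

lemma blocks_ins_a: "blocks ks (cc_ins a) = map cc_ins as"
  using blocks_concat[of "map cc_ins as"] ks_eq by (simp add: ins_a)

lemma blocks_legs_a: "blocks ks (cc_legs a) = map (\<lambda>i. map ((\<cdot>) (leg i)) (cc_legs (as ! i))) [0..<m]"
proof -
  have "map length (map (\<lambda>i. map ((\<cdot>) (leg i)) (cc_legs (as ! i))) [0..<m]) = ks"
    using length_cell_legs[OF as_cell] length_ins_as by (intro nth_equalityI) simp_all
  then show ?thesis
    using blocks_concat[of "map (\<lambda>i. map ((\<cdot>) (leg i)) (cc_legs (as ! i))) [0..<m]"]
    by (simp add: legs_a)
qed

lemma
  assumes i: "i < m" and j: "j < ks ! i"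
  shows nth_ins_a: "cc_ins a ! (offset ks i + j) = cc_ins (as ! i) ! j"
    and nth_legs_a: "cc_legs a ! (offset ks i + j) = leg i \<cdot> cc_legs (as ! i) ! j"
proof -
  have "sum_list ks = length (cc_legs a)" using sum_ks length_cell_legs[OF a_cell] by simp
  then show "cc_legs a ! (offset ks i + j) = leg i \<cdot> cc_legs (as ! i) ! j"
    using nth_nth_blocks[of ks "cc_legs a" i j] i j length_cell_legs[OF as_cell] length_ins_as
    by (simp add: blocks_legs_a)
  show "cc_ins a ! (offset ks i + j) = cc_ins (as ! i) ! j"
    using nth_nth_blocks[OF sum_ks i j] i length_as by (simp add: blocks_ins_a)
qed

lemma boundary_as:
  assumes "i < m"
  shows "boundary (as ! i) 0 = fst (cc_out (as ! i)) \<cdot> cc_left (as ! i)"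
    and "boundary (as ! i) (ks ! i) = snd (cc_out (as ! i)) \<cdot> cc_right (as ! i)"
  using commutes_boundary[OF as_cell[OF assms]] length_ins_as[OF assms] unfolding commutes_def by simp_all

lemma boundary_a_inner:
  assumes i: "i < m" and j: "0 < j" "j \<le> ks ! i"
  shows "boundary a (offset ks i + j) = leg i \<cdot> boundary (as ! i) j"
proof -
  obtain k where k: "j = Suc k" using j(1) by (cases j) auto
  then have k_lt: "k < length (cc_ins (as ! i))" using j(2) length_ins_as[OF i] by simp
  let ?e = "cc_legs (as ! i) ! k" and ?q = "snd (cc_ins (as ! i) ! k)"
  have "boundary a (offset ks i + j) = cc_legs a ! (offset ks i + k) \<cdot> snd (cc_ins a ! (offset ks i + k))"
    using k by simp
  also have "\<dots> = (leg i \<cdot> ?e) \<cdot> ?q"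
    using nth_ins_a[OF i] nth_legs_a[OF i] k_lt length_ins_as[OF i] by simp
  also have "\<dots> = leg i \<cdot> ?e \<cdot> ?q"
    using cell_leg[OF as_cell[OF i] k_lt] cell_in[OF as_cell[OF i] k_lt] leg_arr[OF i] by (simp add: cmp_assoc)
  also have "\<dots> = leg i \<cdot> boundary (as ! i) j"
    using k by simp
  finally show ?thesis .
qed

lemma boundary_a_block_start:
  "i < m \<Longrightarrow> boundary a (offset ks i) = leg i \<cdot> boundary (as ! i) 0"
proof (induction i)
  case 0
  have "boundary a (offset ks 0) = fst (cc_out b) \<cdot> cc_left (as ! 0)"
    by (simp add: out_a left_a)
  also have "\<dots> = boundary b 0 \<cdot> cc_left (as ! 0)"
    by (simp only: boundary_b_0)
  also have "\<dots> = leg 0 \<cdot> boundary (as ! 0) 0"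
    using boundary_b(1)[OF 0] boundary_as(1)[OF 0] leg_arr[OF 0] cell_out[OF as_cell[OF 0]]
      cell_sides[OF as_cell[OF 0]] by (simp add: cmp_assoc)
  finally show ?case .
next
  case (Suc i)
  then have i: "i < m" by simp
  have "boundary a (offset ks (Suc i)) = boundary a (offset ks i + ks ! i)"
    using offset_Suc[OF i] by simp
  also have "\<dots> = leg i \<cdot> boundary (as ! i) (ks ! i)"
    using Suc.IH[OF i] boundary_a_inner[OF i] by (cases "ks ! i = 0") auto
  also have "\<dots> = boundary b (Suc i) \<cdot> cc_right (as ! i)"
    using boundary_b(2)[OF i] boundary_as(2)[OF i] leg_arr[OF i] cell_out[OF as_cell[OF i]]
      cell_sides[OF as_cell[OF i]] by (simp add: cmp_assoc)
  also have "\<dots> = leg (Suc i) \<cdot> boundary (as ! Suc i) 0"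
    using boundary_b(1)[OF Suc.prems] boundary_as(1)[OF Suc.prems] leg_arr[OF Suc.prems]
      cell_out[OF as_cell[OF Suc.prems]] cell_sides[OF as_cell[OF Suc.prems]] right_left[OF Suc.prems]
    by (simp add: cmp_assoc)
  finally show ?case .
qed

definition seam_tight :: "nat \<Rightarrow> 'm" where
  "seam_tight i =
     (if i = 0 then Id (Cod (cc_left a)) else if i = m then Id (Cod (cc_right a)) else cc_left (as ! i))"

lemma seam_tight_arr:
  assumes "i \<le> m"
  shows "seam_tight i \<in> Arr" "Cod (seam_tight i) = Dom (boundary b i)"
proof -
  consider "i = 0" | "i = m" | "0 < i" "i < m" using assms m_pos by linarith
  then have "seam_tight i \<in> Arr \<and> Cod (seam_tight i) = Dom (boundary b i)"
  proof cases
    case 1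
    then show ?thesis
      using cell_sides[OF a_cell] cell_out[OF b_cell]
      by (simp add: seam_tight_def globular_b cmp_Id out_a arr_Id obj_Dom)
  next
    case 2
    then show ?thesis
      using cell_sides[OF a_cell] cell_out[OF b_cell] m_pos boundary_b_m
      by (simp add: seam_tight_def out_a arr_Id obj_Dom)
  next
    case 3
    then show ?thesis
      using cell_sides[OF as_cell] cell_out[OF as_cell] leg_arr boundary_b(1) by (simp add: seam_tight_def)
  qed
  then show "seam_tight i \<in> Arr" "Cod (seam_tight i) = Dom (boundary b i)" by simp_all
qed

lemma seam_map_eq:
  assumes "i \<le> m"
  shows "seam_map a ks i = boundary b i \<cdot> seam_tight i"
proof -
  consider "i = 0" | "i = m" | "0 < i" "i < m" using assms m_pos by linarith
  then show ?thesis
  proof cases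
    case 1
    then show ?thesis
      using cell_sides[OF a_cell] cell_out[OF b_cell] boundary_b_0
      by (simp add: seam_tight_def out_a cmp_Id)
  next
    case 2
    then show ?thesis
      using cell_sides[OF a_cell] cell_out[OF b_cell] boundary_b_m m_pos
      by (simp add: seam_tight_def out_a cmp_Id)
  next
    case 3
    then have "seam_map a ks i = leg i \<cdot> fst (cc_out (as ! i)) \<cdot> cc_left (as ! i)"
      using boundary_a_block_start boundary_as(1) by (simp add: seam_map_def)
    then show ?thesis
      using 3 cell_sides[OF as_cell] cell_out[OF as_cell] leg_arr boundary_b(1)
      by (simp add: seam_tight_def cmp_assoc)
  qed
qed

lemma seam_tight_side_left: "i < m \<Longrightarrow> seam_tight i \<cdot> seam_side a ks i = cc_left (as ! i)"
proof (cases "i = 0")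
  case True
  then show ?thesis using cell_sides[OF a_cell] by (simp add: seam_tight_def seam_side_def left_a Id_cmp)
next
  case False
  assume i: "i < m"
  have "Dom (boundary a (offset ks i)) = Dom (cc_left (as ! i))"
    using boundary_a_block_start[OF i] boundary_as(1)[OF i] cell_sides[OF as_cell[OF i]]
      cell_out[OF as_cell[OF i]] leg_arr[OF i] by (simp add: arr_cmp)
  then show ?thesis
    using False i cell_sides[OF as_cell[OF i]] by (simp add: seam_tight_def seam_side_def cmp_Id)
qed

lemma seam_tight_side_right: "i < m \<Longrightarrow> seam_tight (Suc i) \<cdot> seam_side a ks (Suc i) = cc_right (as ! i)"
proof (cases "Suc i = m")
  case True
  then have "i = m - 1" by simp
  with True show ?thesis
    using cell_sides[OF a_cell] ks_ne by (simp add: seam_tight_def seam_side_def right_a Id_cmp)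
next
  case False
  assume "i < m"
  with False show ?thesis using seam_tight_side_left[of "Suc i"] right_left by simp
qed

definition comparison_cell :: "nat \<Rightarrow> 'm cospan_cell" where
  "comparison_cell i =
     \<lparr>cc_ins = [(seam_map a ks i, seam_map a ks (Suc i))], cc_out = (boundary b i, boundary b (Suc i)),
      cc_left = seam_tight i, cc_right = seam_tight (Suc i), cc_legs = [Id apex]\<rparr>"

lemma comparison_cell_in_cells:
  assumes i: "i < m"
  shows "comparison_cell i \<in> cospan_cells E"
proof (rule cospan_cellsI)
  note seam = seam_map_arr[OF a_cell sum_ks ks_ne]
  have apex: "apex \<in> cat_obj E" using cell_out[OF b_cell] obj_Cod by blast
  show "typed_cell (comparison_cell i)"
    unfolding typed_cell_def comparison_cell_def
    using i seam[of i] seam[of "Suc i"] seam_tight_arr[of i] seam_tight_arr[of "Suc i"]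
      boundary_arr[OF b_cell, of i] boundary_arr[OF b_cell, of "Suc i"] ins_b length_as apex
    by (auto simp: out_a arr_Id intro!: cospansI)
  show "commutes (comparison_cell i) (\<lambda>j. seam_map a ks (i + j))"
    unfolding commutes_def comparison_cell_def
    using i seam[of i] seam[of "Suc i"] seam_map_eq[of i] seam_map_eq[of "Suc i"]
    by (simp add: out_a Id_cmp)
qed

lemma comp_comparison_cell:
  assumes i: "i < m"
  shows "cospan_ccomp E [canonical_block a ks i] (comparison_cell i) = postcompose (leg i) (as ! i)"
proof -
  have "map ((\<cdot>) (Id apex)) (map ((\<cdot>) (leg i)) (cc_legs (as ! i))) = map ((\<cdot>) (leg i)) (cc_legs (as ! i))"
    using leg_arr[OF i] cell_leg[OF as_cell[OF i]] length_cell_legs[OF as_cell[OF i]]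
    by (intro nth_equalityI) (simp_all add: Id_cmp arr_cmp)
  then show ?thesis
    using i length_as boundary_b[OF i] seam_tight_side_left[OF i] seam_tight_side_right[OF i]
    by (simp add: cospan_ccomp_def canonical_block_def comparison_cell_def postcompose_def
        blocks_ins_a blocks_legs_a)
qed

definition normal_blocks :: "'m cospan_cell list" where
  "normal_blocks = map (\<lambda>i. postcompose (leg i) (as ! i)) [0..<m]"

definition normal_glue :: "'m cospan_cell" where
  "normal_glue = b\<lparr>cc_ins := map (\<lambda>i. (boundary b i, boundary b (Suc i))) [0..<m],
     cc_legs := replicate m (Id apex)\<rparr>"

lemma normal_glue_in_cells: "normal_glue \<in> cospan_cells E"
proof (rule cospan_cellsI)
  have apex: "apex \<in> cat_obj E" using cell_out[OF b_cell] obj_Cod by blast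
  show "typed_cell normal_glue"
    using cospan_cellsD[OF b_cell] boundary_arr[OF b_cell] ins_b length_as apex
    unfolding typed_cell_def normal_glue_def
    by (auto simp: arr_Id simp del: boundary.simps intro!: cospansI)
  show "commutes normal_glue (boundary b)"
    using commutes_boundary[OF b_cell] boundary_arr[OF b_cell] ins_b length_as
    unfolding commutes_def normal_glue_def by (auto simp: Id_cmp simp del: boundary.simps)
qed

lemma normal_blocks_composite: "cospan_ccomp E normal_blocks normal_glue = a"
proof -
  have as: "as = map (\<lambda>i. as ! i) [0..<m]" "as \<noteq> []"
    using length_as m_pos by (auto intro: nth_equalityI)
  have legs: "map ((\<cdot>) (Id apex)) (map ((\<cdot>) (leg i)) (cc_legs (as ! i))) = map ((\<cdot>) (leg i)) (cc_legs (as ! i))"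
    if i: "i < m" for i
    using leg_arr[OF i] cell_leg[OF as_cell[OF i]] length_cell_legs[OF as_cell[OF i]]
    by (intro nth_equalityI) (simp_all add: Id_cmp arr_cmp)
  have "map2 (\<lambda>x f. map ((\<cdot>) f) (cc_legs x)) normal_blocks (cc_legs normal_glue)
      = map2 (\<lambda>x f. map ((\<cdot>) f) (cc_legs x)) as (cc_legs b)"
    using legs length_as length_cell_legs[OF b_cell] ins_b
    by (intro nth_equalityI) (simp_all add: normal_blocks_def normal_glue_def postcompose_def)
  moreover have "map cc_ins normal_blocks = map cc_ins as"
    by (simp add: normal_blocks_def postcompose_def comp_def map_nth_as)
  ultimately have "cospan_ccomp E normal_blocks normal_glue = cospan_ccomp E as b"
    using as m_pos length_as
    by (simp add: cospan_ccomp_def normal_blocks_def normal_glue_def postcompose_def hd_conv_nth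
        last_conv_nth)
  then show ?thesis using composite by simp
qed

lemma normal_is_gdecomp: "is_gdecomp (Cospan E) a ks (normal_blocks, normal_glue)"
  unfolding is_gdecomp_def composable_def globular_def arity_def
  using normal_glue_in_cells postcompose_in_cells[OF as_cell leg_arr(1,2)] normal_blocks_composite
    boundary_b right_left length_ins_as left_b right_b
  by (auto simp: normal_blocks_def normal_glue_def postcompose_def simp del: boundary.simps)

lemma Dom_out_as: "Suc i < m \<Longrightarrow> Dom (snd (cc_out (as ! i))) = Dom (fst (cc_out (as ! Suc i)))"
  using boundary_b(2)[of i] boundary_b(1)[of "Suc i"] leg_arr[of i] leg_arr[of "Suc i"]
    cell_out[OF as_cell, of i] cell_out[OF as_cell, of "Suc i"]
  by (metis Dom_cmp Suc_lessD)

definition whiskers :: "'m cospan_cell list" where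
  "whiskers = map (\<lambda>i. postcompose_cell (cc_out (as ! i)) (leg i)) [0..<m]"

lemma whiskers_composite: "cospan_ccomp E whiskers normal_glue = b"
proof (rule cospan_cell.equality)
  have m: "m - 1 < m" using m_pos by simp
  show "cc_ins (cospan_ccomp E whiskers normal_glue) = cc_ins b"
    using ins_b by (simp add: cospan_ccomp_def whiskers_def postcompose_cell_def comp_def map_nth_as)
  show "cc_left (cospan_ccomp E whiskers normal_glue) = cc_left b"
    using m_pos cell_out[OF b_cell] cell_out[OF as_cell[OF m_pos]]
    by (simp add: cospan_ccomp_def whiskers_def postcompose_cell_def normal_glue_def hd_map
        globular_b Dom_out_b_fst cmp_Id arr_Id obj_Dom)
  show "cc_right (cospan_ccomp E whiskers normal_glue) = cc_right b"
    using m_pos cell_out[OF b_cell] cell_out[OF as_cell[OF m]]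
    by (simp add: cospan_ccomp_def whiskers_def postcompose_cell_def normal_glue_def last_map
        globular_b Dom_out_b_snd cmp_Id arr_Id obj_Dom)
  have "cc_legs (cospan_ccomp E whiskers normal_glue) = map (\<lambda>i. Id apex \<cdot> leg i) [0..<m]"
    by (simp add: cospan_ccomp_def whiskers_def postcompose_cell_def normal_glue_def zip_replicate2
        comp_def)
  also have "\<dots> = cc_legs b"
    using leg_arr length_cell_legs[OF b_cell] ins_b length_as
    by (intro nth_equalityI) (simp_all add: Id_cmp)
  finally show "cc_legs (cospan_ccomp E whiskers normal_glue) = cc_legs b" .
qed (simp_all add: cospan_ccomp_def normal_glue_def)

lemma gd_step_normal_to_decomp: "gd_step (Cospan E) (normal_blocks, normal_glue) (as, b)"
  unfolding gd_step_def
proof (rule exI[of _ as], rule exI[of _ normal_glue], rule exI[of _ whiskers], intro conjI allI impI)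
  have m: "m - 1 < m" using m_pos by simp
  show "(normal_blocks, normal_glue) = (map2 (\<lambda>x s. vccomp (Cospan E) [x] s) as whiskers, normal_glue)"
    using comp_postcompose_cell[OF as_cell leg_arr(1,2)] length_as
    by (auto simp: normal_blocks_def whiskers_def intro: nth_equalityI)
  show "(as, b) = (as, vccomp (Cospan E) whiskers normal_glue)"
    using whiskers_composite by simp
  show "set whiskers \<subseteq> vcell (Cospan E)"
    using postcompose_cell_in_cells[OF cell_out(1)[OF as_cell] leg_arr(1,2)]
    by (auto simp: whiskers_def)
  show "composable (Cospan E) whiskers normal_glue"
    using boundary_b Dom_out_as
    by (auto simp: composable_def whiskers_def postcompose_cell_def normal_glue_def simp del: boundary.simps)
  show "vcleft (Cospan E) (hd whiskers) = tid (Cospan E) (tdom (Cospan E) (vcleft (Cospan E) (hd whiskers)))"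
    using m_pos cell_out[OF as_cell[OF m_pos]]
    by (simp add: whiskers_def postcompose_cell_def hd_map obj_Dom)
  show "vcright (Cospan E) (last whiskers) = tid (Cospan E) (tdom (Cospan E) (vcright (Cospan E) (last whiskers)))"
    using m_pos cell_out[OF as_cell[OF m]]
    by (simp add: whiskers_def postcompose_cell_def last_map obj_Dom)
qed (use m_pos length_as in \<open>auto simp: whiskers_def postcompose_cell_def arity_def composable_def\<close>)

lemma canonical_glue_composite:
  "cospan_ccomp E (map comparison_cell [0..<m]) normal_glue = canonical_glue a ks"
proof (rule cospan_cell.equality)
  have m: "m - 1 < m" using m_pos by simp
  show "cc_left (cospan_ccomp E (map comparison_cell [0..<m]) normal_glue) = cc_left (canonical_glue a ks)"
    using m_pos cell_out[OF b_cell] cell_sides[OF a_cell]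
    by (simp add: cospan_ccomp_def comparison_cell_def normal_glue_def canonical_glue_def hd_map
        seam_tight_def globular_b out_a cmp_Id arr_Id obj_Dom)
  show "cc_right (cospan_ccomp E (map comparison_cell [0..<m]) normal_glue) = cc_right (canonical_glue a ks)"
    using m_pos cell_out[OF b_cell] cell_sides[OF a_cell]
    by (simp add: cospan_ccomp_def comparison_cell_def normal_glue_def canonical_glue_def last_map
        seam_tight_def globular_b out_a cmp_Id arr_Id obj_Dom)
  show "cc_legs (cospan_ccomp E (map comparison_cell [0..<m]) normal_glue) = cc_legs (canonical_glue a ks)"
    using cell_out[OF b_cell]
    by (simp add: cospan_ccomp_def comparison_cell_def normal_glue_def canonical_glue_def out_a
        zip_replicate2 comp_def Id_cmp arr_Id obj_Cod map_replicate_const)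
qed (simp_all add: cospan_ccomp_def comparison_cell_def normal_glue_def canonical_glue_def out_a
      comp_def)

lemma gd_step_normal_to_canonical: "gd_step (Cospan E) (normal_blocks, normal_glue) (canonical_decomp a ks)"
  unfolding gd_step_def
proof (rule exI[of _ "map (canonical_block a ks) [0..<m]"], rule exI[of _ normal_glue],
    rule exI[of _ "map comparison_cell [0..<m]"], intro conjI allI impI)
  show "(normal_blocks, normal_glue) = (map2 (\<lambda>x s. vccomp (Cospan E) [x] s)
      (map (canonical_block a ks) [0..<m]) (map comparison_cell [0..<m]), normal_glue)"
    using comp_comparison_cell by (auto simp: normal_blocks_def intro: nth_equalityI)
  show "canonical_decomp a ks = (map (canonical_block a ks) [0..<m],
      vccomp (Cospan E) (map comparison_cell [0..<m]) normal_glue)"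
    by (simp add: canonical_decomp_def canonical_glue_composite)
  show "set (map comparison_cell [0..<m]) \<subseteq> vcell (Cospan E)"
    using comparison_cell_in_cells by auto
  show "composable (Cospan E) (map comparison_cell [0..<m]) normal_glue"
    by (simp add: composable_def comparison_cell_def normal_glue_def)
  show "vcleft (Cospan E) (hd (map comparison_cell [0..<m])) =
      tid (Cospan E) (tdom (Cospan E) (vcleft (Cospan E) (hd (map comparison_cell [0..<m]))))"
    using m_pos cell_sides[OF a_cell] cell_out[OF a_cell]
    by (simp add: comparison_cell_def seam_tight_def hd_map obj_Dom)
  show "vcright (Cospan E) (last (map comparison_cell [0..<m])) =
      tid (Cospan E) (tdom (Cospan E) (vcright (Cospan E) (last (map comparison_cell [0..<m]))))"
    using m_pos cell_sides[OF a_cell] cell_out[OF a_cell]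
    by (simp add: comparison_cell_def seam_tight_def last_map obj_Dom)
qed (use m_pos in \<open>auto simp: comparison_cell_def canonical_block_def arity_def composable_def\<close>)

lemma gd_equiv_canonical: "gd_equiv (Cospan E) a ks (as, b) (canonical_decomp a ks)"
  using gd_equiv_of_steps_from[OF normal_is_gdecomp gdecomp canonical_decomp_is_gdecomp[OF a_cell sum_ks ks_ne]
      gd_step_normal_to_decomp gd_step_normal_to_canonical] .

end

lemma (in cospan_vdc) gd_equiv_canonical_decomp:
  assumes "is_gdecomp (Cospan E) a ks d" and "a \<in> cospan_cells E" and "ks \<noteq> []"
  shows "gd_equiv (Cospan E) a ks d (canonical_decomp a ks)"
proof (cases d)
  case (Pair as b)
  interpret gdecomposition E a ks as b
    using assms Pair by unfold_locales simp_all
  show ?thesis using gd_equiv_canonical Pair by simp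
qed

theorem proposition7p4:
  fixes E :: "('o, 'm) category"
  assumes "is_category E"
  shows "has_globular_decompositions (Cospan E)"
  unfolding has_globular_decompositions_def has_nary_globular_decompositions_def
proof (intro allI ballI impI conjI)
  interpret cospan_vdc E by (rule cospan_vdc.intro) (fact assms)
  fix n \<alpha> ks
  assume "\<alpha> \<in> vcell (Cospan E)" "arity (Cospan E) \<alpha> = n" and ks: "ks \<noteq> [] \<and> sum_list ks = n"
  then have \<alpha>: "\<alpha> \<in> cospan_cells E" "sum_list ks = length (cc_ins \<alpha>)"
    by (simp_all add: arity_def)
  show "\<exists>d. is_gdecomp (Cospan E) \<alpha> ks d"
    using canonical_decomp_is_gdecomp[OF \<alpha>] ks by blast
  fix d d' assume "is_gdecomp (Cospan E) \<alpha> ks d \<and> is_gdecomp (Cospan E) \<alpha> ks d'"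
  then have "gd_equiv (Cospan E) \<alpha> ks d (canonical_decomp \<alpha> ks)"
    "gd_equiv (Cospan E) \<alpha> ks d' (canonical_decomp \<alpha> ks)"
    using gd_equiv_canonical_decomp \<alpha>(1) ks by blast+
  then show "gd_equiv (Cospan E) \<alpha> ks d d'"
    by (blast intro: gd_equiv_trans gd_equiv_sym)
qed

end
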